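(* In $Y_R(\mathfrak{so}_3)$: $$[e_{-1,0}(u),f_{0,-1}(v)]=\frac{k_{-1}^{-1}(u)k_0(u)-k_{-1}^{-1}(v)k_0(v)}{u-v}.$$
   Context: Let $e_{ij}$ ($i,j\in\{-1,0,1\}$) be the matrix units of $\mathrm{End}\,\mathbb{C}^3$, with rows and columns indexed by $-1,0,1$. Let $P=\sum_{i,j}e_{ij}\otimes e_{ji}$, $Q=\sum_{i,j}e_{ij}\otimes e_{-i,-j}$ and $R(u)=1-\frac{P}{u}+\frac{Q}{u-\frac12}$. Let $t$ be the transposition on $\mathrm{End}\,\mathbb{C}^3$ given by $(e_{ij})^t=e_{-j,-i}$. The algebra $Y_R(\mathfrak{so}_3)$ is the unital associative algebra over $\mathbb{C}$ generated by elements $t_{ij}^{(r)}$, $r\ge 1$, $i,j\in\{-1,0,1\}$; put $t_{ij}(u)=\delta_{ij}+\sum_{r\ge1}t^{(r)}_{ij}u^{-r}$, $T(u)=\sum_{i,j}t_{ij}(u)\otimes e_{ij}$, $T^t(u)=\sum_{i,j}t_{ij}(u)\otimes e_{-j,-i}$, $T_1(u)=\sum t_{ij}(u)\otimes e_{ij}\otimes 1$, $T_2(v)=\sum t_{ij}(v)\otimes 1\otimes e_{ij}$. The defining relations are $R(u-v)T_1(u)T_2(v)=T_2(v)T_1(u)R(u-v)$ and $T(u)T^t(u+\frac12)=T^t(u+\frac12)T(u)=1$. The Gauss generators are the unique series $k_i(u)\in 1+u^{-1}Y_R(\mathfrak{so}_3)[[u^{-1}]]$ ($i=-1,0,1$)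 and $e_{ij}(u),f_{ji}(u)\in u^{-1}Y_R(\mathfrak{so}_3)[[u^{-1}]]$ ($-1\le i<j\le1$) such that $T(u)=F(u)K(u)E(u)$, where $F(u)$ is the lower unitriangular matrix with below-diagonal entries $F_{0,-1}=f_{0,-1}(u)$, $F_{1,-1}=f_{1,-1}(u)$, $F_{1,0}=f_{1,0}(u)$, $K(u)=\mathrm{diag}(k_{-1}(u),k_0(u),k_1(u))$, and $E(u)$ is the upper unitriangular matrix with above-diagonal entries $E_{-1,0}=e_{-1,0}(u)$, $E_{-1,1}=e_{-1,1}(u)$, $E_{0,1}=e_{01}(u)$ (rows/columns indexed by $-1,0,1$). *)

theory Defs
  imports Main Complex_Main
begin

text \<open>
  Formal power series in u^{-1} with coefficients in a (possibly noncommutative)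
  algebra 'a: a series is represented by its coefficient sequence,
  f n = coefficient of u^{-n}.  Two-variable series with possibly positive powers
  are represented as g m n = coefficient of u^m v^n (m, n integers).
  Indices of End C^3 are the integers -1, 0, 1.
\<close>

type_synonym 'a ser = "nat \<Rightarrow> 'a"
type_synonym 'a ser2 = "int \<Rightarrow> int \<Rightarrow> 'a"

definition idx3 :: "int set" where "idx3 = {-1, 0, 1}"

definition ser_one :: "'a::ring_1 ser" where
  "ser_one = (\<lambda>n. if n = 0 then 1 else 0)"

definition ser_zero :: "'a::ring_1 ser" where
  "ser_zero = (\<lambda>n. 0)"

definition ser_mult :: "'a::ring_1 ser \<Rightarrow> 'a ser \<Rightarrow> 'a ser" (infixl "\<star>" 70) where
  "f \<star> g = (\<lambda>n. \<Sum>k\<le>n. f k * g (n - k))"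

text \<open>Two-sided inverse of a series (exists and is unique when the constant term is 1).\<close>
definition ser_inv :: "'a::ring_1 ser \<Rightarrow> 'a ser" where
  "ser_inv f = (THE g. g \<star> f = ser_one \<and> f \<star> g = ser_one)"

text \<open>Substitution u \<mapsto> u + c in a series in u^{-1}:
  (u+c)^{-r} = \<Sum>_k binom(-r,k) c^k u^{-r-k}.\<close>
definition ser_shift :: "real \<Rightarrow> 'a::real_algebra_1 ser \<Rightarrow> 'a ser" where
  "ser_shift c f = (\<lambda>n. if n = 0 then f 0
      else (\<Sum>r\<in>{1..n}. ((-c) ^ (n - r) * real ((n - 1) choose (n - r))) *\<^sub>R f r))"

text \<open>Divided difference (X(u) - X(v))/(u - v) of a series X, as a series in
  u^{-1}, v^{-1}: coefficient of u^{-p} v^{-q}.  Since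
  (u^{-r} - v^{-r})/(u - v) = - \<Sum>_{a+b=r-1} u^{-b-1} v^{-a-1}, this is -X_{p+q-1}
  for p,q \<ge> 1 and 0 otherwise.\<close>
definition ser_ddiff :: "'a::ring_1 ser \<Rightarrow> nat \<Rightarrow> nat \<Rightarrow> 'a" where
  "ser_ddiff X = (\<lambda>p q. if p = 0 \<or> q = 0 then 0 else - X (p + q - 1))"

definition ser2_embed :: "(nat \<Rightarrow> nat \<Rightarrow> 'a::zero) \<Rightarrow> 'a ser2" where
  "ser2_embed S = (\<lambda>m n. if m \<le> 0 \<and> n \<le> 0 then S (nat (-m)) (nat (-n)) else 0)"

text \<open>Multiplication by (u - v).\<close>
definition ser2_D :: "'a::ab_group_add ser2 \<Rightarrow> 'a ser2" where
  "ser2_D S = (\<lambda>m n. S (m - 1) n - S m (n - 1))"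

text \<open>Action (by multiplication) of the ((a,b),(x,y)) entry of the polynomial matrix
  (u-v)(u-v-1/2) R(u-v) = (u-v)(u-v-1/2) 1 - (u-v-1/2) P + (u-v) Q
  on a two-variable series S.  Here P_{(a,b),(x,y)} = [x=b][y=a] and
  Q_{(a,b),(x,y)} = [b=-a][y=-x].\<close>
definition Rpoly_act :: "int \<Rightarrow> int \<Rightarrow> int \<Rightarrow> int \<Rightarrow> 'a::real_algebra_1 ser2 \<Rightarrow> 'a ser2" where
  "Rpoly_act a b x y S = (\<lambda>m n.
     (if a = x \<and> b = y then ser2_D (ser2_D S) m n - (1/2) *\<^sub>R ser2_D S m n else 0)
   - (if x = b \<and> y = a then ser2_D S m n - (1/2) *\<^sub>R S m n else 0)
   + (if b = - a \<and> y = - x then ser2_D S m n else 0))"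

text \<open>Defining relations of Y_R(so_3) for a family t i j (coefficients t_{ij}^{(r)},
  with t i j 0 = \<delta>_{ij}):
  the RTT relation (multiplied by the scalar polynomial (u-v)(u-v-1/2)), with
  (T_1(u)T_2(v))_{(x,y),(c,d)} = t_{xc}(u) t_{yd}(v) and
  (T_2(v)T_1(u))_{(a,b),(x,y)} = t_{by}(v) t_{ax}(u),
  and the unitarity relations T(u)T^t(u+1/2) = T^t(u+1/2)T(u) = 1 with
  (T^t)_{ab} = t_{-b,-a}.\<close>
definition YR_so3_rel :: "(int \<Rightarrow> int \<Rightarrow> 'a::real_algebra_1 ser) \<Rightarrow> bool" where
  "YR_so3_rel t \<longleftrightarrow>
     (\<forall>i\<in>idx3. \<forall>j\<in>idx3. t i j 0 = (if i = j then 1 else 0)) \<and>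
     (\<forall>a\<in>idx3. \<forall>b\<in>idx3. \<forall>c\<in>idx3. \<forall>d\<in>idx3. \<forall>m n.
        (\<Sum>x\<in>idx3. \<Sum>y\<in>idx3.
           Rpoly_act a b x y (ser2_embed (\<lambda>p q. t x c p * t y d q)) m n)
      = (\<Sum>x\<in>idx3. \<Sum>y\<in>idx3.
           Rpoly_act x y c d (ser2_embed (\<lambda>p q. t b y q * t a x p)) m n)) \<and>
     (\<forall>a\<in>idx3. \<forall>c\<in>idx3. \<forall>n.
        (\<Sum>b\<in>idx3. (t a b \<star> ser_shift (1/2) (t (-c) (-b))) n)
          = (if a = c \<and> n = 0 then 1 else 0)) \<and>
     (\<forall>a\<in>idx3. \<forall>c\<in>idx3. \<forall>n.
        (\<Sum>b\<in>idx3. (ser_shift (1/2) (t (-b) (-a)) \<star> t b c) n)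
          = (if a = c \<and> n = 0 then 1 else 0))"

text \<open>Gauss decomposition T(u) = F(u) K(u) E(u): k l is k_l(u), e i j (i<j) is e_{ij}(u),
  f j i (i<j) is f_{ji}(u).\<close>
definition gauss_F :: "(int \<Rightarrow> int \<Rightarrow> 'a::ring_1 ser) \<Rightarrow> int \<Rightarrow> int \<Rightarrow> 'a ser" where
  "gauss_F f i l = (if i = l then ser_one else if l < i then f i l else ser_zero)"

definition gauss_E :: "(int \<Rightarrow> int \<Rightarrow> 'a::ring_1 ser) \<Rightarrow> int \<Rightarrow> int \<Rightarrow> 'a ser" where
  "gauss_E e l j = (if l = j then ser_one else if l < j then e l j else ser_zero)"

definition is_gauss_decomp ::
  "(int \<Rightarrow> int \<Rightarrow> 'a::ring_1 ser) \<Rightarrow> (int \<Rightarrow> 'a ser) \<Rightarrow> (int \<Rightarrow> int \<Rightarrow> 'a ser)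
     \<Rightarrow> (int \<Rightarrow> int \<Rightarrow> 'a ser) \<Rightarrow> bool" where
  "is_gauss_decomp t k e f \<longleftrightarrow>
     (\<forall>l\<in>idx3. k l 0 = 1) \<and>
     (\<forall>i\<in>idx3. \<forall>j\<in>idx3. i < j \<longrightarrow> e i j 0 = 0 \<and> f j i 0 = 0) \<and>
     (\<forall>i\<in>idx3. \<forall>j\<in>idx3. \<forall>n.
        t i j n = (\<Sum>l\<in>idx3. (gauss_F f i l \<star> k l \<star> gauss_E e l j) n))"

end

theory Submission
  imports Defs "HOL-Computational_Algebra.Formal_Power_Series"
begin

text \<open>Series in \<open>u\<^sup>-\<^sup>1\<close> are formal power series, and series in \<open>u\<^sup>-\<^sup>1, v\<^sup>-\<^sup>1\<close> are power
  series over power series, in which \<open>u - v\<close> becomes a cancellable central element.  For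
  \<open>b \<noteq> -a\<close> and \<open>d \<noteq> -c\<close> the \<open>Q\<close>-term of \<open>R(u - v)\<close> does not contribute, and after cancelling
  the factor \<open>u - v - 1/2\<close> the RTT relation reads
  \<open>(u - v) [t\<^sub>a\<^sub>c(u), t\<^sub>b\<^sub>d(v)] = t\<^sub>b\<^sub>c(u) t\<^sub>a\<^sub>d(v) - t\<^sub>b\<^sub>c(v) t\<^sub>a\<^sub>d(u)\<close>.
  Substituting the Gauss decomposition \<open>t\<^sub>-\<^sub>1\<^sub>,\<^sub>-\<^sub>1 = k\<^sub>-\<^sub>1\<close>, \<open>t\<^sub>-\<^sub>1\<^sub>,\<^sub>0 = k\<^sub>-\<^sub>1 e\<^sub>-\<^sub>1\<^sub>,\<^sub>0\<close>,
  \<open>t\<^sub>0\<^sub>,\<^sub>-\<^sub>1 = f\<^sub>0\<^sub>,\<^sub>-\<^sub>1 k\<^sub>-\<^sub>1\<close>, \<open>t\<^sub>0\<^sub>,\<^sub>0 = f\<^sub>0\<^sub>,\<^sub>-\<^sub>1 k\<^sub>-\<^sub>1 e\<^sub>-\<^sub>1\<^sub>,\<^sub>0 + k\<^sub>0\<close> into five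
  instances of this relation and cancelling the invertible series \<open>k\<^sub>-\<^sub>1(u)\<close>, \<open>k\<^sub>-\<^sub>1(v)\<close>
  leaves \<open>(u - v) [e\<^sub>-\<^sub>1\<^sub>,\<^sub>0(u), f\<^sub>0\<^sub>,\<^sub>-\<^sub>1(v)] = g(u) - g(v)\<close> with \<open>g = k\<^sub>-\<^sub>1\<^sup>-\<^sup>1 k\<^sub>0\<close>.  As
  \<open>e\<^sub>-\<^sub>1\<^sub>,\<^sub>0\<close> has no constant term, this recursion pins down every coefficient of the
  commutator as that of the divided difference of \<open>g\<close>.\<close>

notation fps_nth (infixl "\<diamondop>" 75)

section \<open>Relations with a central cancellable factor\<close>

lemma left_inverse_cancel: "c * b = 1 \<Longrightarrow> b * x = b * y \<Longrightarrow> x = (y :: 'a::ring_1)"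
  by (metis mult.assoc mult_1)

lemma right_inverse_cancel: "b * c = 1 \<Longrightarrow> x * b = y * b \<Longrightarrow> x = (y :: 'a::ring_1)"
  by (metis mult.assoc mult.right_neutral)

definition central :: "'a::semigroup_mult \<Rightarrow> bool" where
  "central c \<longleftrightarrow> (\<forall>x. x * c = c * x)"

lemma central_commute: "central c \<Longrightarrow> x * c = c * x"
  by (simp add: central_def)

lemma central_left_commute: "central c \<Longrightarrow> x * (c * y) = c * (x * y)"
  by (metis central_def mult.assoc)

text \<open>Both rules are permutative, so the simplifier uses them for ordered rewriting: central
  elements move to the left only past terms that are larger in the term order, which keeps
  rewriting with two central elements terminating.\<close>

lemmas central_simps = central_commute central_left_commute

text \<open>\<open>N\<close> and \<open>Z\<close> play the roles of \<open>u - v\<close> and \<open>1\<close>.  In the lemmas of this locale \<open>a, e, f, k\<close>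
  stand for \<open>k\<^sub>-\<^sub>1(u), e\<^sub>-\<^sub>1\<^sub>0(u), f\<^sub>0\<^sub>-\<^sub>1(u), k\<^sub>0(u)\<close> and primed letters for the same
  series in \<open>v\<close>, and \<open>ai, a'i\<close> for inverses of \<open>a, a'\<close>.\<close>

locale central_cancellative =
  fixes N Z :: "'r::ring_1"
  assumes central_N [simp]: "central N" and central_Z [simp]: "central Z"
    and N_cancel: "\<And>x. N * x = 0 \<Longrightarrow> x = 0"
begin

lemma k_e_relation:
  assumes inv: "a'i * a' = 1" and comm: "a * a' = a' * a"
    and rel: "N * (a * (a' * e') - a' * e' * a) = Z * (a * (a' * e') - a' * (a * e))"
  shows "N * (a * e' - e' * a) = Z * (a * (e' - e))"
proof (rule left_inverse_cancel[OF inv])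
  have comm': "a' * (a * y) = a * (a' * y)" for y by (metis comm mult.assoc)
  show "a' * (N * (a * e' - e' * a)) = a' * (Z * (a * (e' - e)))"
    using rel by (simp add: algebra_simps central_simps comm comm')
qed

lemma k_f_relation:
  assumes inv: "a' * a'i = 1" and comm: "a * a' = a' * a"
    and rel: "N * (a * (f' * a') - f' * a' * a) = Z * (f * a * a' - f' * a' * a)"
  shows "N * (a * f' - f' * a) = Z * ((f - f') * a)"
proof (rule right_inverse_cancel[OF inv])
  have comm': "a' * (a * y) = a * (a' * y)" for y by (metis comm mult.assoc)
  show "N * (a * f' - f' * a) * a' = Z * ((f - f') * a) * a'"
    using rel by (simp add: algebra_simps central_simps comm comm')
qed

lemma e_k_relation:
  assumes inv: "ai * a = 1" and comm: "a * a' = a' * a"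
    and rel: "N * (a * e * a' - a' * (a * e)) = Z * (a' * (a * e) - a * (a' * e'))"
  shows "N * (e * a' - a' * e) = Z * (a' * (e - e'))"
proof (rule left_inverse_cancel[OF inv])
  have comm': "a' * (a * y) = a * (a' * y)" for y by (metis comm mult.assoc)
  show "a * (N * (e * a' - a' * e)) = a * (Z * (a' * (e - e')))"
    using rel by (simp add: algebra_simps central_simps comm comm')
qed

lemma k_k0_commute:
  assumes comm: "a * a' = a' * a"
    and ke: "N * (a * e' - e' * a) = Z * (a * (e' - e))"
    and kf: "N * (a * f' - f' * a) = Z * ((f - f') * a)"
    and rel: "N * (a * (f' * a' * e' + k') - (f' * a' * e' + k') * a)
            = Z * (f * a * (a' * e') - f' * a' * (a * e))"
  shows "a * k' = k' * a"
proof -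
  have comm': "a' * (a * y) = a * (a' * y)" for y by (metis comm mult.assoc)
  have "N * (a * (f' * a' * e' + k') - (f' * a' * e' + k') * a)
      = N * (a * f' - f' * a) * (a' * e') + f' * (a' * (N * (a * e' - e' * a))) + N * (a * k' - k' * a)"
    by (simp add: algebra_simps central_simps comm comm')
  also have "\<dots> = Z * ((f - f') * a) * (a' * e') + f' * (a' * (Z * (a * (e' - e)))) + N * (a * k' - k' * a)"
    by (simp only: ke kf)
  finally have "N * (a * k' - k' * a) = 0"
    using rel by (simp add: algebra_simps central_simps comm comm')
  then show ?thesis using N_cancel by fastforce
qed

lemma conjugated_e_f_commutator:
  assumes comm: "a * a' = a' * a"
    and ke: "N * (a * e' - e' * a) = Z * (a * (e' - e))"
    and ek: "N * (e * a' - a' * e) = Z * (a' * (e - e'))"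
    and kf: "N * (a * f' - f' * a) = Z * ((f - f') * a)"
    and rel: "N * (a * e * (f' * a') - f' * a' * (a * e))
            = Z * ((f * a * e + k) * a' - (f' * a' * e' + k') * a)"
  shows "N * (a * (e * f' - f' * e) * a') = Z * (k * a' - k' * a)"
proof -
  define c where "c = e * f' - f' * e"
  have comm': "a' * (a * y) = a * (a' * y)" for y by (metis comm mult.assoc)
  have kf': "N * (a * f') = N * (f' * a) + Z * ((f - f') * a)"
    using kf by (simp add: algebra_simps)
  have ek': "N * (e * a') = N * (a' * e) + Z * (a' * (e - e'))"
    using ek by (simp add: algebra_simps)
  have ke': "N * (e' * a) = N * (a * e') - Z * (a * (e' - e))"
    using ke by (simp add: algebra_simps)
  have "N * (N * (a * e * (f' * a') - f' * a' * (a * e)))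
      = N * (N * (a * c * a')) + N * (a * f') * (N * (e * a')) - N * (N * (f' * a' * (a * e)))"
    by (simp add: c_def algebra_simps central_simps)
  also have "\<dots> = N * (N * (a * c * a'))
      + (N * (f' * a) + Z * ((f - f') * a)) * (N * (a' * e) + Z * (a' * (e - e')))
      - N * (N * (f' * a' * (a * e)))"
    by (simp only: kf' ek')
  finally have lhs: "N * (N * (a * e * (f' * a') - f' * a' * (a * e))) = \<dots>" .
  have "N * (Z * ((f * a * e + k) * a' - (f' * a' * e' + k') * a))
      = Z * (f * a * (N * (e * a'))) + N * (Z * (k * a'))
        - Z * (f' * a' * (N * (e' * a))) - N * (Z * (k' * a))"
    by (simp add: algebra_simps central_simps)
  also have "\<dots> = Z * (f * a * (N * (a' * e) + Z * (a' * (e - e')))) + N * (Z * (k * a'))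
        - Z * (f' * a' * (N * (a * e') - Z * (a * (e' - e)))) - N * (Z * (k' * a))"
    by (simp only: ek' ke')
  finally have rhs: "N * (Z * ((f * a * e + k) * a' - (f' * a' * e' + k') * a)) = \<dots>" .
  have "N * (N * (a * c * a') - Z * (k * a' - k' * a))
      = N * (N * (a * e * (f' * a') - f' * a' * (a * e)))
        - N * (Z * ((f * a * e + k) * a' - (f' * a' * e' + k') * a))"
    unfolding lhs rhs by (simp add: algebra_simps central_simps comm comm')
  also have "\<dots> = 0" using rel by simp
  finally show ?thesis
    using N_cancel by (fastforce simp: c_def)
qed

lemma e_f_commutator:
  assumes inv: "ai * a = 1" "a'i * a' = 1" "a' * a'i = 1"
    and kk: "a * k' = k' * a" "a' * k' = k' * a'"
    and conj: "N * (a * (e * f' - f' * e) * a') = Z * (k * a' - k' * a)"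
  shows "N * (e * f' - f' * e) = Z * (ai * k - a'i * k')"
proof -
  have cancel: "ai * (a * y) = y" for y
    using inv by (metis mult.assoc mult_1)
  have k'a: "k' * (a * y) = a * (k' * y)" for y
    by (metis kk(1) mult.assoc)
  have k'a'i: "k' * a'i = a'i * k'"
    by (metis kk(2) inv(2,3) mult.assoc mult_1 mult.right_neutral)
  have "N * (e * f' - f' * e) = ai * (N * (a * (e * f' - f' * e) * a')) * a'i"
    by (simp add: mult.assoc central_simps cancel inv(3))
  also have "\<dots> = Z * (ai * k - a'i * k')"
    unfolding conj by (simp add: algebra_simps central_simps cancel k'a k'a'i inv(3))
  finally show ?thesis .
qed

end

section \<open>Series in one and two variables\<close>

lemma Abs_fps_ser_mult: "Abs_fps (x \<star> y) = Abs_fps x * Abs_fps y"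
  by (simp add: fps_eq_iff fps_mult_nth ser_mult_def atMost_atLeast0)

lemma Abs_fps_ser_one: "Abs_fps ser_one = 1"
  by (simp add: fps_eq_iff ser_one_def)

lemma Abs_fps_ser_zero: "Abs_fps ser_zero = 0"
  by (simp add: fps_eq_iff ser_zero_def)

lemma Abs_fps_injective: "Abs_fps x = Abs_fps y \<Longrightarrow> x = y"
  by (metis fps_nth_Abs_fps ext)

lemma Abs_fps_ser_inv:
  fixes x :: "'a::ring_1 ser"
  assumes "x 0 = 1"
  shows "Abs_fps (ser_inv x) * Abs_fps x = 1" and "Abs_fps x * Abs_fps (ser_inv x) = 1"
proof -
  define R where "R = fps_right_inverse (Abs_fps x) 1"
  have right: "Abs_fps x * R = 1" and left: "R * Abs_fps x = 1"
    unfolding R_def using assms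
    by (simp_all add: fps_right_inverse fps_left_inverse'[of 1])
  have "ser_inv x = fps_nth R"
    unfolding ser_inv_def
  proof (rule the_equality)
    show "fps_nth R \<star> x = ser_one \<and> x \<star> fps_nth R = ser_one"
      using left right by (metis Abs_fps_injective Abs_fps_ser_mult Abs_fps_ser_one fps_nth_inverse)
  next
    fix g assume "g \<star> x = ser_one \<and> x \<star> g = ser_one"
    then have "Abs_fps g * Abs_fps x = 1" by (metis Abs_fps_ser_mult Abs_fps_ser_one)
    then have "Abs_fps g = R" by (metis right mult.assoc mult_1 mult.right_neutral)
    then show "g = fps_nth R" by auto
  qed
  with left right show "Abs_fps (ser_inv x) * Abs_fps x = 1" "Abs_fps x * Abs_fps (ser_inv x) = 1"
    by (simp_all add: fps_nth_inverse)
qed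

text \<open>Series in \<open>u\<^sup>-\<^sup>1, v\<^sup>-\<^sup>1\<close> are power series in the outer variable \<open>u\<^sup>-\<^sup>1\<close> whose
  coefficients are power series in the inner variable \<open>v\<^sup>-\<^sup>1\<close>.  Then \<open>diff_uv\<close> is
  \<open>v\<^sup>-\<^sup>1 - u\<^sup>-\<^sup>1 = (u - v) u\<^sup>-\<^sup>1 v\<^sup>-\<^sup>1\<close> and \<open>prod_uv\<close> is \<open>u\<^sup>-\<^sup>1 v\<^sup>-\<^sup>1\<close>, so a relation
  \<open>(u - v) X = Y\<close> reads \<open>diff_uv * X = prod_uv * Y\<close>.\<close>

definition in_u :: "'a::zero fps \<Rightarrow> 'a fps fps" where
  "in_u s = Abs_fps (\<lambda>p. fps_const (s \<diamondop> p))"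

definition in_v :: "'a::zero fps \<Rightarrow> 'a fps fps" where
  "in_v s = fps_const s"

definition diff_uv :: "'a::ring_1 fps fps" where
  "diff_uv = in_v fps_X - fps_X"

definition prod_uv :: "'a::ring_1 fps fps" where
  "prod_uv = fps_X * in_v fps_X"

lemma fps_const_sum: "fps_const (sum g A) = (\<Sum>i\<in>A. fps_const (g i))"
  by (induction A rule: infinite_finite_induct) (simp_all flip: fps_const_add)

lemma in_u_mult: "in_u (a * b) = in_u a * in_u (b :: 'a::ring_1 fps)"
  by (simp add: in_u_def fps_eq_iff fps_mult_nth fps_const_sum)

lemma in_u_add: "in_u (a + b) = in_u a + in_u (b :: 'a::ring_1 fps)"
  by (simp add: in_u_def fps_eq_iff)

lemma in_u_1: "in_u 1 = (1 :: 'a::ring_1 fps fps)"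
  by (simp add: in_u_def fps_eq_iff fps_one_nth)

lemma in_v_mult: "in_v (a * b) = in_v a * in_v (b :: 'a::ring_1 fps)"
  by (simp add: in_v_def)

lemma in_v_add: "in_v (a + b) = in_v a + in_v (b :: 'a::ring_1 fps)"
  by (simp add: in_v_def)

lemma in_v_1: "in_v 1 = (1 :: 'a::ring_1 fps fps)"
  by (simp add: in_v_def)

lemma in_u_nth [simp]: "in_u a \<diamondop> p = fps_const (a \<diamondop> p)"
  by (simp add: in_u_def)

lemma in_v_nth [simp]: "in_v b \<diamondop> p = (if p = 0 then b else 0)"
  by (simp add: in_v_def)

lemma in_u_mult_in_v_nth [simp]: "(in_u a * in_v b) \<diamondop> p = fps_const (a \<diamondop> p) * (b :: 'a::ring_1 fps)"
  by (simp add: in_v_def)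

lemma in_v_mult_in_u_nth [simp]: "(in_v b * in_u a) \<diamondop> p = b * fps_const ((a :: 'a::ring_1 fps) \<diamondop> p)"
  by (simp add: in_v_def)

lemma in_u_in_v_commute_iff:
  "in_u a * in_v b = in_v b * in_u a \<longleftrightarrow> (\<forall>p q. a \<diamondop> p * b \<diamondop> q = b \<diamondop> q * (a :: 'a::ring_1 fps) \<diamondop> p)"
  by (simp add: fps_eq_iff)

lemma fps_commute_if_coeffs_commute:
  fixes a b :: "'a::ring_1 fps"
  assumes "\<And>p q. a \<diamondop> p * b \<diamondop> q = b \<diamondop> q * a \<diamondop> p"
  shows "a * b = b * a"
proof (rule fps_ext)
  fix n
  have "(\<Sum>i=0..n. a \<diamondop> i * b \<diamondop> (n - i)) = (\<Sum>i=0..n. b \<diamondop> i * a \<diamondop> (n - i))"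
    by (subst sum.atLeastAtMost_rev[of _ 0 n, simplified]) (auto simp: assms intro: sum.cong)
  then show "(a * b) \<diamondop> n = (b * a) \<diamondop> n" by (simp add: fps_mult_nth)
qed

lemma diff_uv_mult_nth:
  "(diff_uv * X) \<diamondop> p \<diamondop> q = (if q = 0 then 0 else X \<diamondop> p \<diamondop> (q - 1)) - (if p = 0 then 0 else X \<diamondop> (p - 1) \<diamondop> q)"
  by (simp add: diff_uv_def in_v_def left_diff_distrib)

lemma prod_uv_mult_nth:
  "(prod_uv * X) \<diamondop> p \<diamondop> q = (if p = 0 \<or> q = 0 then 0 else X \<diamondop> (p - 1) \<diamondop> (q - 1))"
  by (simp add: prod_uv_def in_v_def mult.assoc)

lemma central_diff_uv: "central diff_uv"
  unfolding central_def by (simp add: fps_eq_iff diff_uv_def in_v_def left_diff_distrib right_diff_distrib fps_mult_fps_X_commute)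

lemma central_prod_uv: "central prod_uv"
proof -
  have "X * fps_const fps_X = fps_const fps_X * X" for X :: "'a fps fps"
    by (simp add: fps_eq_iff fps_mult_fps_X_commute)
  then show ?thesis
    unfolding central_def by (metis prod_uv_def in_v_def mult.assoc fps_mult_fps_X_commute)
qed

lemma diff_uv_mult_eq_0:
  fixes X :: "'a::ring_1 fps fps"
  assumes "diff_uv * X = 0"
  shows "X = 0"
proof -
  have step: "(if q = 0 then 0 else X \<diamondop> p \<diamondop> (q - 1)) = (if p = 0 then 0 else X \<diamondop> (p - 1) \<diamondop> q)" for p q
    using arg_cong[OF assms, of "\<lambda>Y. Y \<diamondop> p \<diamondop> q"] by (simp add: diff_uv_mult_nth)
  have "X \<diamondop> p \<diamondop> q = 0" for p q
  proof (induction p arbitrary: q)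
    case 0 show ?case using step[where p = 0 and q = "Suc q"] by simp
  next
    case (Suc p) show ?case using step[where p = "Suc p" and q = "Suc q"] Suc by simp
  qed
  then show ?thesis by (simp add: fps_eq_iff)
qed

lemma diff_uv_mult_eqI:
  fixes X Y :: "'a::ring_1 fps fps"
  assumes "\<And>q. X \<diamondop> 0 \<diamondop> q = 0" and "\<And>p. X \<diamondop> p \<diamondop> 0 = 0"
    and "\<And>p q. X \<diamondop> Suc p \<diamondop> q - X \<diamondop> p \<diamondop> Suc q = Y \<diamondop> p \<diamondop> q"
  shows "diff_uv * X = prod_uv * Y"
proof (intro fps_ext)
  fix p q
  show "(diff_uv * X) \<diamondop> p \<diamondop> q = (prod_uv * Y) \<diamondop> p \<diamondop> q"
    unfolding diff_uv_mult_nth prod_uv_mult_nth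
    using assms(3)[of "p - 1" "q - 1"] assms(1,2) by (cases p; cases q) simp_all
qed

lemma diff_uv_mult_eqD:
  fixes X Y :: "'a::ring_1 fps fps"
  assumes "diff_uv * X = prod_uv * Y"
  shows "X \<diamondop> Suc p \<diamondop> q - X \<diamondop> p \<diamondop> Suc q = Y \<diamondop> p \<diamondop> q"
  using arg_cong[OF assms, of "\<lambda>Z. Z \<diamondop> Suc p \<diamondop> Suc q"]
  by (simp add: diff_uv_mult_nth prod_uv_mult_nth)

interpretation uv: central_cancellative "diff_uv :: 'a::ring_1 fps fps" prod_uv
  by unfold_locales (use central_diff_uv central_prod_uv diff_uv_mult_eq_0 in auto)

lemma ser_ddiff_unique:
  fixes X :: "'a::ring_1 fps fps"
  assumes rel: "diff_uv * X = prod_uv * (in_u (Abs_fps g) - in_v (Abs_fps g))"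
    and X0: "\<And>q. X \<diamondop> 0 \<diamondop> q = 0"
  shows "X \<diamondop> p \<diamondop> q = ser_ddiff g p q"
proof (induction p arbitrary: q)
  case 0 show ?case by (simp add: X0 ser_ddiff_def)
next
  case (Suc p)
  have "X \<diamondop> Suc p \<diamondop> q - X \<diamondop> p \<diamondop> Suc q = (if q = 0 then g p else 0) - (if p = 0 then g q else 0)"
    using diff_uv_mult_eqD[OF rel, of p q] by (simp add: in_u_def in_v_def)
  then show ?case using Suc.IH[of "Suc q"] by (cases p; cases q) (simp_all add: ser_ddiff_def)
qed

section \<open>The RTT relation\<close>

lemma sum_sum_delta:
  assumes "finite A" "finite B" "a \<in> A" "b \<in> B"
  shows "(\<Sum>x\<in>A. \<Sum>y\<in>B. if x = a \<and> y = b then G x y else 0) = (G a b :: 'b::comm_monoid_add)"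
proof -
  have "(\<Sum>x\<in>A. \<Sum>y\<in>B. if x = a \<and> y = b then G x y else 0)
      = (\<Sum>x\<in>A. if x = a then \<Sum>y\<in>B. if y = b then G x y else 0 else 0)"
    by (rule sum.cong) auto
  with assms show ?thesis by (simp add: sum.delta')
qed

lemma finite_idx3: "finite idx3"
  by (simp add: idx3_def)

lemma sum_Rpoly_act_left:
  assumes "a \<in> idx3" "b \<in> idx3" "b \<noteq> - a"
  shows "(\<Sum>x\<in>idx3. \<Sum>y\<in>idx3. Rpoly_act a b x y (S x y) m n)
    = (ser2_D (ser2_D (S a b)) m n - (1/2) *\<^sub>R ser2_D (S a b) m n)
      - (ser2_D (S b a) m n - (1/2) *\<^sub>R S b a m n)"
proof -
  have "(\<Sum>x\<in>idx3. \<Sum>y\<in>idx3. Rpoly_act a b x y (S x y) m n)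
      = (\<Sum>x\<in>idx3. \<Sum>y\<in>idx3. if x = a \<and> y = b then ser2_D (ser2_D (S x y)) m n - (1/2) *\<^sub>R ser2_D (S x y) m n else 0)
      - (\<Sum>x\<in>idx3. \<Sum>y\<in>idx3. if x = b \<and> y = a then ser2_D (S x y) m n - (1/2) *\<^sub>R S x y m n else 0)"
    using assms(3) unfolding Rpoly_act_def by (simp add: sum_subtractf[symmetric] eq_commute[of a] eq_commute[of b])
  with assms show ?thesis by (simp only: sum_sum_delta finite_idx3)
qed

lemma sum_Rpoly_act_right:
  assumes "c \<in> idx3" "d \<in> idx3" "d \<noteq> - c"
  shows "(\<Sum>x\<in>idx3. \<Sum>y\<in>idx3. Rpoly_act x y c d (S x y) m n)
    = (ser2_D (ser2_D (S c d)) m n - (1/2) *\<^sub>R ser2_D (S c d) m n)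
      - (ser2_D (S d c) m n - (1/2) *\<^sub>R S d c m n)"
proof -
  have "(\<Sum>x\<in>idx3. \<Sum>y\<in>idx3. Rpoly_act x y c d (S x y) m n)
      = (\<Sum>x\<in>idx3. \<Sum>y\<in>idx3. if x = c \<and> y = d then ser2_D (ser2_D (S x y)) m n - (1/2) *\<^sub>R ser2_D (S x y) m n else 0)
      - (\<Sum>x\<in>idx3. \<Sum>y\<in>idx3. if x = d \<and> y = c then ser2_D (S x y) m n - (1/2) *\<^sub>R S x y m n else 0)"
    using assms(3) unfolding Rpoly_act_def by (simp add: sum_subtractf[symmetric] eq_commute[of c] eq_commute[of d] conj_commute)
  with assms show ?thesis by (simp only: sum_sum_delta finite_idx3)
qed

lemma u_minus_v_minus_half_cancel:
  fixes H :: "'a::real_vector ser2"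
  assumes D_half: "\<And>m n. ser2_D H m n = (1/2) *\<^sub>R H m n"
    and bounded: "\<And>m n. 2 \<le> m \<Longrightarrow> H m n = 0"
  shows "H m n = 0"
proof -
  have step: "H (m - 1) n = H m (n - 1) + (1/2) *\<^sub>R H m n" for m n
    using D_half[of m n] by (simp add: ser2_D_def algebra_simps)
  have "\<forall>n. H (1 - int j) n = 0" for j
  proof (induction j)
    case 0 show ?case using step[of 2] bounded by simp
  next
    case (Suc j)
    show ?case using step[of "1 - int j"] Suc by (simp add: algebra_simps)
  qed
  moreover have "m \<ge> 2 \<or> m = 1 - int (nat (1 - m))" by auto
  ultimately show ?thesis using bounded by metis
qed

lemma YR_so3_rtt_coeff:
  fixes t :: "int \<Rightarrow> int \<Rightarrow> 'a::real_algebra_1 ser"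
  assumes rel: "YR_so3_rel t"
    and idx: "a \<in> idx3" "b \<in> idx3" "c \<in> idx3" "d \<in> idx3" and "b \<noteq> - a" "d \<noteq> - c"
  shows "(t a c (Suc p) * t b d q - t b d q * t a c (Suc p))
           - (t a c p * t b d (Suc q) - t b d (Suc q) * t a c p)
         = t b c p * t a d q - t b c q * t a d p"
proof -
  define L where "L = (\<lambda>x y. ser2_embed (\<lambda>p q. t x c p * t y d q))"
  define R where "R = (\<lambda>x y. ser2_embed (\<lambda>p q. t b y q * t a x p))"
  text \<open>\<open>H\<close> is the difference of the two sides of
    \<open>(u - v) [t\<^sub>a\<^sub>c(u), t\<^sub>b\<^sub>d(v)] = t\<^sub>b\<^sub>c(u) t\<^sub>a\<^sub>d(v) - t\<^sub>b\<^sub>c(v) t\<^sub>a\<^sub>d(u)\<close>, and the defining relation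
    says that \<open>u - v - 1/2\<close> annihilates it.\<close>
  define H where "H = (\<lambda>m n. (ser2_D (L a b) m n - L b a m n) - (ser2_D (R c d) m n - R d c m n))"
  have "(\<Sum>x\<in>idx3. \<Sum>y\<in>idx3. Rpoly_act a b x y (L x y) m n)
      = (\<Sum>x\<in>idx3. \<Sum>y\<in>idx3. Rpoly_act x y c d (R x y) m n)" for m n
    using rel idx unfolding YR_so3_rel_def L_def R_def by blast
  then have "ser2_D H m n = (1/2) *\<^sub>R H m n" for m n
    unfolding sum_Rpoly_act_left[OF assms(2,3,6)] sum_Rpoly_act_right[OF assms(4,5,7)]
    by (simp add: H_def ser2_D_def algebra_simps)
  then have "H (- int p) (- int q) = 0"
    by (rule u_minus_v_minus_half_cancel) (simp add: H_def L_def R_def ser2_D_def ser2_embed_def)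
  moreover have "nat (1 + int p) = Suc p" "nat (1 + int q) = Suc q" by auto
  ultimately show ?thesis
    unfolding H_def L_def R_def ser2_D_def ser2_embed_def by (simp add: algebra_simps)
qed

lemma YR_so3_rtt_fps:
  fixes t :: "int \<Rightarrow> int \<Rightarrow> 'a::real_algebra_1 ser"
  assumes rel: "YR_so3_rel t"
    and idx: "a \<in> idx3" "b \<in> idx3" "c \<in> idx3" "d \<in> idx3" "b \<noteq> - a" "d \<noteq> - c"
  defines "T \<equiv> \<lambda>i j. Abs_fps (t i j)"
  shows "diff_uv * (in_u (T a c) * in_v (T b d) - in_v (T b d) * in_u (T a c))
       = prod_uv * (in_u (T b c) * in_v (T a d) - in_v (T b c) * in_u (T a d))"
    and "diff_uv * (in_u (T b d) * in_v (T a c) - in_v (T a c) * in_u (T b d))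
       = prod_uv * (in_v (T b c) * in_u (T a d) - in_u (T b c) * in_v (T a d))"
proof -
  have t0: "t i j 0 = (if i = j then 1 else 0)" if "i \<in> idx3" "j \<in> idx3" for i j
    using rel that unfolding YR_so3_rel_def by blast
  note coeff = YR_so3_rtt_coeff[OF assms(1-7)]
  show "diff_uv * (in_u (T a c) * in_v (T b d) - in_v (T b d) * in_u (T a c))
       = prod_uv * (in_u (T b c) * in_v (T a d) - in_v (T b c) * in_u (T a d))"
    by (rule diff_uv_mult_eqI) (use coeff t0 idx in \<open>simp_all add: T_def\<close>)
  show "diff_uv * (in_u (T b d) * in_v (T a c) - in_v (T a c) * in_u (T b d))
       = prod_uv * (in_v (T b c) * in_u (T a d) - in_u (T b c) * in_v (T a d))"
  proof (rule diff_uv_mult_eqI)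
    fix p q
    show "(in_u (T b d) * in_v (T a c) - in_v (T a c) * in_u (T b d)) \<diamondop> Suc p \<diamondop> q
        - (in_u (T b d) * in_v (T a c) - in_v (T a c) * in_u (T b d)) \<diamondop> p \<diamondop> Suc q
        = (in_v (T b c) * in_u (T a d) - in_u (T b c) * in_v (T a d)) \<diamondop> p \<diamondop> q"
      using coeff[of q p] by (simp add: T_def algebra_simps)
  qed (use t0 idx in \<open>simp_all add: T_def\<close>)
qed

section \<open>Gauss coordinates\<close>

locale YR_so3_gauss =
  fixes t :: "int \<Rightarrow> int \<Rightarrow> 'a::real_algebra_1 ser"
    and k :: "int \<Rightarrow> 'a ser"
    and e f :: "int \<Rightarrow> int \<Rightarrow> 'a ser"
  assumes rel: "YR_so3_rel t"
    and gauss: "is_gauss_decomp t k e f"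
begin

lemma gauss_entries:
  shows "Abs_fps (t (-1) (-1)) = Abs_fps (k (-1))"
    and "Abs_fps (t (-1) 0) = Abs_fps (k (-1)) * Abs_fps (e (-1) 0)"
    and "Abs_fps (t 0 (-1)) = Abs_fps (f 0 (-1)) * Abs_fps (k (-1))"
    and "Abs_fps (t 0 0) = Abs_fps (f 0 (-1)) * Abs_fps (k (-1)) * Abs_fps (e (-1) 0) + Abs_fps (k 0)"
proof -
  have entry: "Abs_fps (t i j)
      = (\<Sum>l\<in>idx3. Abs_fps (gauss_F f i l) * Abs_fps (k l) * Abs_fps (gauss_E e l j))"
    if "i \<in> idx3" "j \<in> idx3" for i j
    using gauss that unfolding is_gauss_decomp_def
    by (auto simp: fps_eq_iff fps_sum_nth simp flip: Abs_fps_ser_mult)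
  show "Abs_fps (t (-1) (-1)) = Abs_fps (k (-1))"
    and "Abs_fps (t (-1) 0) = Abs_fps (k (-1)) * Abs_fps (e (-1) 0)"
    and "Abs_fps (t 0 (-1)) = Abs_fps (f 0 (-1)) * Abs_fps (k (-1))"
    and "Abs_fps (t 0 0) = Abs_fps (f 0 (-1)) * Abs_fps (k (-1)) * Abs_fps (e (-1) 0) + Abs_fps (k 0)"
    using entry[of "-1" "-1"] entry[of "-1" 0] entry[of 0 "-1"] entry[of 0 0]
    by (simp_all add: idx3_def gauss_F_def gauss_E_def Abs_fps_ser_one Abs_fps_ser_zero)
qed

lemma k_minus_one_coeffs_commute: "k (-1) p * k (-1) q = k (-1) q * k (-1) p"
proof (induction p arbitrary: q)
  case 0
  have "k (-1) 0 = 1" using gauss unfolding is_gauss_decomp_def idx3_def by simp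
  then show ?case by simp
next
  case (Suc p)
  have "t (-1) (-1) = k (-1)" using gauss_entries(1) by (rule Abs_fps_injective)
  with YR_so3_rtt_coeff[OF rel, of "-1" "-1" "-1" "-1" p q] Suc[of q] Suc[of "Suc q"]
  show ?case by (simp add: idx3_def)
qed

abbreviation "kmu \<equiv> in_u (Abs_fps (k (-1)))"
abbreviation "kmv \<equiv> in_v (Abs_fps (k (-1)))"
abbreviation "k0u \<equiv> in_u (Abs_fps (k 0))"
abbreviation "k0v \<equiv> in_v (Abs_fps (k 0))"
abbreviation "eu \<equiv> in_u (Abs_fps (e (-1) 0))"
abbreviation "ev \<equiv> in_v (Abs_fps (e (-1) 0))"
abbreviation "fu \<equiv> in_u (Abs_fps (f 0 (-1)))"
abbreviation "fv \<equiv> in_v (Abs_fps (f 0 (-1)))"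

lemma rtt_gauss:
  shows rtt_k_ke: "diff_uv * (kmu * (kmv * ev) - kmv * ev * kmu)
      = prod_uv * (kmu * (kmv * ev) - kmv * (kmu * eu))"
    and rtt_ke_k: "diff_uv * (kmu * eu * kmv - kmv * (kmu * eu))
      = prod_uv * (kmv * (kmu * eu) - kmu * (kmv * ev))"
    and rtt_k_fk: "diff_uv * (kmu * (fv * kmv) - fv * kmv * kmu)
      = prod_uv * (fu * kmu * kmv - fv * kmv * kmu)"
    and rtt_ke_fk: "diff_uv * (kmu * eu * (fv * kmv) - fv * kmv * (kmu * eu))
      = prod_uv * ((fu * kmu * eu + k0u) * kmv - (fv * kmv * ev + k0v) * kmu)"
    and rtt_k_fke: "diff_uv * (kmu * (fv * kmv * ev + k0v) - (fv * kmv * ev + k0v) * kmu)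
      = prod_uv * (fu * kmu * (kmv * ev) - fv * kmv * (kmu * eu))"
  using YR_so3_rtt_fps(1)[OF rel, of "-1" "-1" "-1" 0] YR_so3_rtt_fps(2)[OF rel, of "-1" "-1" "-1" 0]
    YR_so3_rtt_fps(1)[OF rel, of "-1" 0 "-1" "-1"] YR_so3_rtt_fps(1)[OF rel, of "-1" 0 0 "-1"]
    YR_so3_rtt_fps(1)[OF rel, of "-1" 0 "-1" 0]
  by (simp_all add: idx3_def gauss_entries in_u_mult in_v_mult in_u_add in_v_add)

lemma e_f_commutator_fps:
  "diff_uv * (eu * fv - fv * eu)
     = prod_uv * (in_u (Abs_fps (ser_inv (k (-1)) \<star> k 0)) - in_v (Abs_fps (ser_inv (k (-1)) \<star> k 0)))"
proof -
  define kinv where "kinv = Abs_fps (ser_inv (k (-1)))"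
  have "k (-1) 0 = 1" using gauss unfolding is_gauss_decomp_def idx3_def by simp
  note inv = Abs_fps_ser_inv[of "k (-1)", OF this, folded kinv_def]
  have inv_uv: "in_u kinv * kmu = 1" "in_v kinv * kmv = 1" "kmv * in_v kinv = 1"
    by (simp_all add: inv in_u_1 in_v_1 flip: in_u_mult in_v_mult)
  have comm: "kmu * kmv = kmv * kmu"
    by (simp add: in_u_in_v_commute_iff k_minus_one_coeffs_commute)
  note ke = uv.k_e_relation[OF inv_uv(2) comm rtt_k_ke]
  note kf = uv.k_f_relation[OF inv_uv(3) comm rtt_k_fk]
  note ek = uv.e_k_relation[OF inv_uv(1) comm rtt_ke_k]
  have kk0: "kmu * k0v = k0v * kmu"
    by (rule uv.k_k0_commute[OF comm ke kf rtt_k_fke])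
  then have "Abs_fps (k (-1)) * Abs_fps (k 0) = Abs_fps (k 0) * Abs_fps (k (-1))"
    by (intro fps_commute_if_coeffs_commute) (simp add: in_u_in_v_commute_iff)
  then have kk0': "kmv * k0v = k0v * kmv"
    by (simp flip: in_v_mult)
  have "diff_uv * (eu * fv - fv * eu) = prod_uv * (in_u kinv * k0u - in_v kinv * k0v)"
    by (rule uv.e_f_commutator[OF inv_uv kk0 kk0'
          uv.conjugated_e_f_commutator[OF comm ke ek kf rtt_ke_fk]])
  then show ?thesis
    by (simp add: kinv_def Abs_fps_ser_mult in_u_mult in_v_mult)
qed

lemma e_f_commutator_coeff:
  "e (-1) 0 p * f 0 (-1) q - f 0 (-1) q * e (-1) 0 p = ser_ddiff (ser_inv (k (-1)) \<star> k 0) p q"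
proof -
  have "e (-1) 0 0 = 0" using gauss unfolding is_gauss_decomp_def idx3_def by simp
  then show ?thesis
    using ser_ddiff_unique[OF e_f_commutator_fps, of p q] by simp
qed

end

theorem proposition3p3:
  fixes t :: "int \<Rightarrow> int \<Rightarrow> 'a::real_algebra_1 ser"
    and k :: "int \<Rightarrow> 'a ser"
    and e f :: "int \<Rightarrow> int \<Rightarrow> 'a ser"
  assumes "YR_so3_rel t"
    and "is_gauss_decomp t k e f"
  shows "\<forall>p q. e (-1) 0 p * f 0 (-1) q - f 0 (-1) q * e (-1) 0 p
               = ser_ddiff (ser_inv (k (-1)) \<star> k 0) p q"
proof -
  interpret YR_so3_gauss t k e f using assms by unfold_locales
  show ?thesis using e_f_commutator_coeff by blast
qed

end
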